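(* Let $A$ be an evolution algebra with natural basis $B=\{e_i:i\in\Lambda\}$ and structure matrix $(\omega_{ki})$. Then $M$ is a maximal modular ideal of $A$ if and only if $M=\mathrm{lin}\{e_i:i\in\Lambda\setminus\{i_0\}\}$ for some modular index $i_0\in\Lambda$, in which case $\frac{1}{\omega_{i_0i_0}}e_{i_0}$ is a modular unit for $M$.
   Context: An evolution algebra is an algebra $A$ over $\mathbb{K}\in\{\mathbb{R},\mathbb{C}\}$ with a basis $\{e_i:i\in\Lambda\}$ (natural basis) with $e_ie_j=0$ for $i\neq j$; write $e_j^2=\sum_k\omega_{kj}e_k$. An ideal $M$ is modular if some $u\in A$ (modular unit) satisfies $a-au\in M$ for all $a\in A$; a maximal modular ideal is a proper modular ideal maximal among proper modular ideals. An index $i_0$ is a modular index if $\omega_{i_0i_0}\neq0$ and $\omega_{i_0j}=0$ for all $j\neq i_0$. *)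

theory Defs
  imports Main "HOL-Analysis.Analysis"
begin

text \<open>Concrete model of an evolution algebra with natural basis indexed by the type 'i
  (the index set Lambda is UNIV :: 'i set) over a field 'k (real_normed_field: by
  Gelfand-Mazur exactly R or C). Elements are finitely supported coordinate
  functions; coordinate k of an element is its coefficient at e_k.
  The structure matrix is w, where e_j^2 = sum_k w k j e_k.\<close>

definition evo_carrier :: "('i \<Rightarrow> 'k::real_normed_field) set" where
  "evo_carrier = {x. finite {i. x i \<noteq> 0}}"

definition evo_basis :: "'i \<Rightarrow> ('i \<Rightarrow> 'k::real_normed_field)" where
  "evo_basis i = (\<lambda>j. if j = i then 1 else 0)"

definition evo_add :: "('i \<Rightarrow> 'k::real_normed_field) \<Rightarrow> ('i \<Rightarrow> 'k) \<Rightarrow> ('i \<Rightarrow> 'k)" where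
  "evo_add x y = (\<lambda>i. x i + y i)"

definition evo_scale :: "'k::real_normed_field \<Rightarrow> ('i \<Rightarrow> 'k) \<Rightarrow> ('i \<Rightarrow> 'k)" where
  "evo_scale c x = (\<lambda>i. c * x i)"

definition evo_diff :: "('i \<Rightarrow> 'k::real_normed_field) \<Rightarrow> ('i \<Rightarrow> 'k) \<Rightarrow> ('i \<Rightarrow> 'k)" where
  "evo_diff x y = (\<lambda>i. x i - y i)"

text \<open>Product: (sum_j x_j e_j)(sum_j y_j e_j) = sum_j x_j y_j e_j^2 = sum_k (sum_j x_j y_j w k j) e_k.\<close>
definition evo_mult :: "('i \<Rightarrow> 'i \<Rightarrow> 'k::real_normed_field) \<Rightarrow> ('i \<Rightarrow> 'k) \<Rightarrow> ('i \<Rightarrow> 'k) \<Rightarrow> ('i \<Rightarrow> 'k)" where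
  "evo_mult w x y = (\<lambda>k. \<Sum>j\<in>{j. x j \<noteq> 0 \<and> y j \<noteq> 0}. x j * y j * w k j)"

definition evo_structure :: "('i \<Rightarrow> 'i \<Rightarrow> 'k::real_normed_field) \<Rightarrow> bool" where
  "evo_structure w \<longleftrightarrow> (\<forall>j. finite {k. w k j \<noteq> 0})"

definition evo_ideal :: "('i \<Rightarrow> 'i \<Rightarrow> 'k::real_normed_field) \<Rightarrow> ('i \<Rightarrow> 'k) set \<Rightarrow> bool" where
  "evo_ideal w M \<longleftrightarrow> M \<subseteq> evo_carrier \<and> (\<lambda>_. 0) \<in> M \<and>
     (\<forall>x\<in>M. \<forall>y\<in>M. evo_add x y \<in> M) \<and>
     (\<forall>c. \<forall>x\<in>M. evo_scale c x \<in> M) \<and>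
     (\<forall>a\<in>evo_carrier. \<forall>m\<in>M. evo_mult w a m \<in> M \<and> evo_mult w m a \<in> M)"

definition evo_modular_unit :: "('i \<Rightarrow> 'i \<Rightarrow> 'k::real_normed_field) \<Rightarrow> ('i \<Rightarrow> 'k) set \<Rightarrow> ('i \<Rightarrow> 'k) \<Rightarrow> bool" where
  "evo_modular_unit w M u \<longleftrightarrow> u \<in> evo_carrier \<and>
     (\<forall>a\<in>evo_carrier. evo_diff a (evo_mult w a u) \<in> M)"

definition evo_modular_ideal :: "('i \<Rightarrow> 'i \<Rightarrow> 'k::real_normed_field) \<Rightarrow> ('i \<Rightarrow> 'k) set \<Rightarrow> bool" where
  "evo_modular_ideal w M \<longleftrightarrow> evo_ideal w M \<and> (\<exists>u. evo_modular_unit w M u)"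

definition evo_max_modular_ideal :: "('i \<Rightarrow> 'i \<Rightarrow> 'k::real_normed_field) \<Rightarrow> ('i \<Rightarrow> 'k) set \<Rightarrow> bool" where
  "evo_max_modular_ideal w M \<longleftrightarrow> evo_modular_ideal w M \<and> M \<noteq> evo_carrier \<and>
     (\<forall>N. evo_modular_ideal w N \<and> N \<noteq> evo_carrier \<and> M \<subseteq> N \<longrightarrow> N = M)"

definition evo_modular_index :: "('i \<Rightarrow> 'i \<Rightarrow> 'k::real_normed_field) \<Rightarrow> 'i \<Rightarrow> bool" where
  "evo_modular_index w i0 \<longleftrightarrow> w i0 i0 \<noteq> 0 \<and> (\<forall>j. j \<noteq> i0 \<longrightarrow> w i0 j = 0)"

definition evo_lin :: "'i set \<Rightarrow> ('i \<Rightarrow> 'k::real_normed_field) set" where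
  "evo_lin S = {x. \<exists>F c. finite F \<and> F \<subseteq> S \<and> x = (\<lambda>k. \<Sum>i\<in>F. c i * evo_basis i k)}"

end

theory Submission
  imports Defs
begin

text \<open>If \<open>e\<^sub>i \<notin> M\<close> for a modular ideal \<open>M\<close> with unit \<open>u\<close>, then no \<open>m \<in> M\<close> has a nonzero
  \<open>i\<close>-th coordinate: otherwise \<open>e\<^sub>i m = m\<^sub>i e\<^sub>i\<^sup>2\<close> and \<open>e\<^sub>i - e\<^sub>i u = e\<^sub>i - u\<^sub>i e\<^sub>i\<^sup>2\<close> would put \<open>e\<^sub>i\<close>
  into \<open>M\<close>. So \<open>M\<close> lies in the hyperplane \<open>x\<^sub>i = 0\<close>, and reading off the \<open>i\<close>-th coordinate
  of \<open>e\<^sub>j - e\<^sub>j u \<in> M\<close> shows that \<open>i\<close> is a modular index. Conversely, for a modular index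
  \<open>i\<close> the hyperplane is an ideal of codimension one with unit \<open>e\<^sub>i / \<omega>\<^sub>i\<^sub>i\<close>, hence maximal.\<close>

definition evo_hyperplane :: "'i \<Rightarrow> ('i \<Rightarrow> 'k::real_normed_field) set" where
  "evo_hyperplane i = {x \<in> evo_carrier. x i = 0}"

lemma evo_mult_eq_sum:
  assumes "finite F" "{j. x j \<noteq> 0} \<subseteq> F"
  shows "evo_mult w x y k = (\<Sum>j\<in>F. x j * y j * w k j)"
  unfolding evo_mult_def
  by (rule sum.mono_neutral_left) (use assms in auto)

lemma evo_mult_single_support:
  assumes "{i. x i \<noteq> 0} \<subseteq> {j}"
  shows "evo_mult w x y = (\<lambda>k. x j * y j * w k j)"
  using evo_mult_eq_sum[of "{j}" x] assms by auto

lemma evo_mult_basis: "evo_mult w (evo_basis j) y = (\<lambda>k. y j * w k j)"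
  by (subst evo_mult_single_support[of _ j]) (auto simp: evo_basis_def)

lemma evo_mult_commute: "evo_mult w x y = evo_mult w y x"
  unfolding evo_mult_def by (auto simp: conj_commute ac_simps)

lemma evo_carrier_add: "x \<in> evo_carrier \<Longrightarrow> y \<in> evo_carrier \<Longrightarrow> evo_add x y \<in> evo_carrier"
  unfolding evo_carrier_def evo_add_def
  by (auto intro: finite_subset[of _ "{i. x i \<noteq> 0} \<union> {i. y i \<noteq> 0}"])

lemma evo_carrier_scale: "x \<in> evo_carrier \<Longrightarrow> evo_scale c x \<in> evo_carrier"
  unfolding evo_carrier_def evo_scale_def
  by (auto intro: finite_subset[of _ "{i. x i \<noteq> 0}"])

lemma evo_carrier_diff: "x \<in> evo_carrier \<Longrightarrow> y \<in> evo_carrier \<Longrightarrow> evo_diff x y \<in> evo_carrier"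
  unfolding evo_carrier_def evo_diff_def
  by (auto intro: finite_subset[of _ "{i. x i \<noteq> 0} \<union> {i. y i \<noteq> 0}"])

lemma evo_carrier_basis: "evo_basis i \<in> evo_carrier"
  unfolding evo_carrier_def evo_basis_def by auto

lemma evo_carrier_zero: "(\<lambda>_. 0) \<in> evo_carrier"
  unfolding evo_carrier_def by auto

lemma evo_carrier_mult:
  assumes "evo_structure w" "x \<in> evo_carrier"
  shows "evo_mult w x y \<in> evo_carrier"
proof -
  let ?F = "{j. x j \<noteq> 0}"
  have fin: "finite ?F" using assms(2) by (simp add: evo_carrier_def)
  have "{k. evo_mult w x y k \<noteq> 0} \<subseteq> (\<Union>j\<in>?F. {k. w k j \<noteq> 0})"
  proof
    fix k assume "k \<in> {k. evo_mult w x y k \<noteq> 0}"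
    then have "(\<Sum>j\<in>?F. x j * y j * w k j) \<noteq> 0"
      using evo_mult_eq_sum[OF fin, of x w y k] by simp
    then obtain j where "j \<in> ?F" "x j * y j * w k j \<noteq> 0" by (meson sum.neutral)
    then show "k \<in> (\<Union>j\<in>?F. {k. w k j \<noteq> 0})" by auto
  qed
  moreover have "finite (\<Union>j\<in>?F. {k. w k j \<noteq> 0})"
    using fin assms(1) by (auto simp: evo_structure_def)
  ultimately show ?thesis unfolding evo_carrier_def by (auto intro: finite_subset)
qed

lemma evo_carrier_eq_basis_sum:
  assumes "x \<in> evo_carrier"
  shows "x = (\<lambda>k. \<Sum>j\<in>{j. x j \<noteq> 0}. x j * evo_basis j k)"
  using assms
  by (auto simp: evo_carrier_def evo_basis_def if_distrib[of "\<lambda>t. x _ * t"] cong: if_cong)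

lemma evo_lin_Diff_singleton:
  "evo_lin (UNIV - {i}) = (evo_hyperplane i :: ('i \<Rightarrow> 'k::real_normed_field) set)"
proof (intro equalityI subsetI)
  fix x :: "'i \<Rightarrow> 'k" assume "x \<in> evo_lin (UNIV - {i})"
  then obtain F c where F: "finite F" "F \<subseteq> UNIV - {i}" "x = (\<lambda>k. \<Sum>j\<in>F. c j * evo_basis j k)"
    by (auto simp: evo_lin_def)
  then have "x k = (if k \<in> F then c k else 0)" for k
    by (simp add: evo_basis_def if_distrib[of "\<lambda>t. c _ * t"] cong: if_cong)
  with F(1,2) show "x \<in> evo_hyperplane i"
    unfolding evo_hyperplane_def evo_carrier_def
    by (auto intro: finite_subset[of _ F] split: if_splits)
next
  fix x :: "'i \<Rightarrow> 'k" assume "x \<in> evo_hyperplane i"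
  then have "x \<in> evo_carrier" "x i = 0" by (auto simp: evo_hyperplane_def)
  with evo_carrier_eq_basis_sum[of x] show "x \<in> evo_lin (UNIV - {i})"
    unfolding evo_lin_def evo_carrier_def by blast
qed

lemma evo_ideal_subset_carrier: "evo_ideal w M \<Longrightarrow> M \<subseteq> evo_carrier"
  and evo_ideal_zero: "evo_ideal w M \<Longrightarrow> (\<lambda>_. 0) \<in> M"
  and evo_ideal_add: "evo_ideal w M \<Longrightarrow> x \<in> M \<Longrightarrow> y \<in> M \<Longrightarrow> evo_add x y \<in> M"
  and evo_ideal_scale: "evo_ideal w M \<Longrightarrow> x \<in> M \<Longrightarrow> evo_scale c x \<in> M"
  and evo_ideal_mult: "evo_ideal w M \<Longrightarrow> a \<in> evo_carrier \<Longrightarrow> m \<in> M \<Longrightarrow> evo_mult w a m \<in> M"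
  by (simp_all add: evo_ideal_def)

lemma evo_ideal_lincomb:
  assumes "evo_ideal w M" "finite F" "\<forall>j\<in>F. g j \<in> M"
  shows "(\<lambda>k. \<Sum>j\<in>F. c j * g j k) \<in> M"
  using assms(2,3)
proof (induction F rule: finite_induct)
  case empty
  then show ?case using evo_ideal_zero[OF assms(1)] by simp
next
  case (insert j F)
  then have "(\<lambda>k. \<Sum>j\<in>insert j F. c j * g j k) =
      evo_add (evo_scale (c j) (g j)) (\<lambda>k. \<Sum>j\<in>F. c j * g j k)"
    by (simp add: evo_add_def evo_scale_def)
  then show ?case using insert evo_ideal_add[OF assms(1)] evo_ideal_scale[OF assms(1)] by simp
qed

lemma evo_ideal_proper_basis_notin:
  assumes "evo_ideal w M" "M \<noteq> evo_carrier"
  obtains i where "evo_basis i \<notin> M"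
proof -
  have "\<exists>i. evo_basis i \<notin> M"
  proof (rule ccontr)
    assume "\<nexists>i. evo_basis i \<notin> M"
    obtain x where x: "x \<in> evo_carrier" "x \<notin> M"
      using assms evo_ideal_subset_carrier by blast
    have "(\<lambda>k. \<Sum>j\<in>{j. x j \<noteq> 0}. x j * evo_basis j k) \<in> M"
      using \<open>\<nexists>i. evo_basis i \<notin> M\<close> x(1)
      by (intro evo_ideal_lincomb[OF assms(1)]) (auto simp: evo_carrier_def)
    then have "x \<in> M" by (subst evo_carrier_eq_basis_sum[OF x(1)])
    with x(2) show False ..
  qed
  with that show thesis by blast
qed

lemma evo_ideal_hyperplane:
  assumes "evo_structure w" "evo_modular_index w i"
  shows "evo_ideal w (evo_hyperplane i)"
proof -
  have mult_in: "evo_mult w a m \<in> evo_hyperplane i"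
    if a: "a \<in> evo_carrier" and m: "m \<in> evo_hyperplane i" for a m
  proof -
    have fin: "finite {j. a j \<noteq> 0}" using a by (simp add: evo_carrier_def)
    have "evo_mult w a m i = (\<Sum>j\<in>{j. a j \<noteq> 0}. a j * m j * w i j)"
      by (rule evo_mult_eq_sum[OF fin]) simp
    also have "\<dots> = 0"
      using m assms(2) by (intro sum.neutral) (auto simp: evo_hyperplane_def evo_modular_index_def)
    finally show ?thesis
      using evo_carrier_mult[OF assms(1) a] by (simp add: evo_hyperplane_def)
  qed
  show ?thesis
    unfolding evo_ideal_def
    using mult_in evo_carrier_zero evo_carrier_add evo_carrier_scale
    by (auto simp: evo_hyperplane_def evo_add_def evo_scale_def evo_mult_commute)
qed

lemma evo_modular_unit_hyperplane:
  fixes w :: "'i \<Rightarrow> 'i \<Rightarrow> 'k::real_normed_field"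
  assumes "evo_structure w" "evo_modular_index w i"
  shows "evo_modular_unit w (evo_hyperplane i) (evo_scale (1 / w i i) (evo_basis i))"
  unfolding evo_modular_unit_def
proof (intro conjI ballI)
  let ?u = "evo_scale (1 / w i i) (evo_basis i)"
  show "?u \<in> evo_carrier" by (rule evo_carrier_scale[OF evo_carrier_basis])
  fix a :: "'i \<Rightarrow> 'k" assume a: "a \<in> evo_carrier"
  have au: "evo_mult w a ?u = (\<lambda>k. 1 / w i i * a i * w k i)"
    by (subst evo_mult_commute, subst evo_mult_single_support[of _ i])
      (auto simp: evo_scale_def evo_basis_def)
  have "evo_diff a (evo_mult w a ?u) \<in> evo_carrier"
    using evo_carrier_diff[OF a evo_carrier_mult[OF assms(1) a]] .
  with assms(2) show "evo_diff a (evo_mult w a ?u) \<in> evo_hyperplane i"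
    by (simp add: au evo_diff_def evo_hyperplane_def evo_modular_index_def)
qed

lemma evo_hyperplane_maximal:
  assumes "evo_ideal w N" "evo_hyperplane i \<subseteq> N" "N \<noteq> evo_carrier"
  shows "N = evo_hyperplane i"
proof (rule ccontr)
  assume "N \<noteq> evo_hyperplane i"
  then obtain x where x: "x \<in> N" "x i \<noteq> 0"
    using assms(2) evo_ideal_subset_carrier[OF assms(1)] by (auto simp: evo_hyperplane_def)
  have "y \<in> N" if y: "y \<in> evo_carrier" for y
  proof -
    let ?c = "y i / x i"
    let ?z = "evo_diff y (evo_scale ?c x)"
    have "x \<in> evo_carrier" using x(1) evo_ideal_subset_carrier[OF assms(1)] by blast
    then have "?z \<in> evo_carrier" by (intro evo_carrier_diff[OF y] evo_carrier_scale)
    then have "?z \<in> evo_hyperplane i"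
      using x(2) by (simp add: evo_hyperplane_def evo_diff_def evo_scale_def)
    then have "evo_add (evo_scale ?c x) ?z \<in> N"
      using assms(2) x(1) by (intro evo_ideal_add[OF assms(1)] evo_ideal_scale[OF assms(1)]) auto
    moreover have "evo_add (evo_scale ?c x) ?z = y"
      by (simp add: evo_add_def evo_scale_def evo_diff_def)
    ultimately show ?thesis by simp
  qed
  then show False using assms(3) evo_ideal_subset_carrier[OF assms(1)] by blast
qed

lemma evo_max_modular_ideal_hyperplane:
  assumes "evo_structure w" "evo_modular_index w i"
  shows "evo_max_modular_ideal w (evo_hyperplane i)"
proof -
  have "evo_basis i \<notin> evo_hyperplane i" by (simp add: evo_hyperplane_def evo_basis_def)
  then have "evo_hyperplane i \<noteq> evo_carrier" using evo_carrier_basis by metis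
  moreover have "evo_modular_ideal w (evo_hyperplane i)"
    unfolding evo_modular_ideal_def
    using evo_ideal_hyperplane[OF assms] evo_modular_unit_hyperplane[OF assms] by blast
  moreover have "N = evo_hyperplane i"
    if "evo_modular_ideal w N" "N \<noteq> evo_carrier" "evo_hyperplane i \<subseteq> N" for N
    using evo_hyperplane_maximal[of w N i] that unfolding evo_modular_ideal_def by blast
  ultimately show ?thesis unfolding evo_max_modular_ideal_def by blast
qed

lemma evo_modular_unit_basis:
  assumes "evo_modular_unit w M u"
  shows "evo_diff (evo_basis j) (evo_scale (u j) (\<lambda>k. w k j)) \<in> M"
proof -
  have "\<forall>a\<in>evo_carrier. evo_diff a (evo_mult w a u) \<in> M"
    using assms by (simp add: evo_modular_unit_def)
  then have "evo_diff (evo_basis j) (evo_mult w (evo_basis j) u) \<in> M"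
    using evo_carrier_basis by (rule bspec)
  then show ?thesis by (simp add: evo_mult_basis evo_scale_def)
qed

lemma evo_modular_ideal_subset_hyperplane:
  assumes M: "evo_ideal w M" and u: "evo_modular_unit w M u" and i: "evo_basis i \<notin> M"
  shows "M \<subseteq> evo_hyperplane i"
proof
  fix m assume m: "m \<in> M"
  show "m \<in> evo_hyperplane i"
  proof (rule ccontr)
    assume "m \<notin> evo_hyperplane i"
    with m evo_ideal_subset_carrier[OF M] have mi: "m i \<noteq> 0" by (auto simp: evo_hyperplane_def)
    have "evo_scale (u i / m i) (evo_mult w (evo_basis i) m) \<in> M"
      by (intro evo_ideal_scale[OF M] evo_ideal_mult[OF M evo_carrier_basis m])
    then have col: "evo_scale (u i) (\<lambda>k. w k i) \<in> M"
      using mi by (simp add: evo_mult_basis evo_scale_def)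
    have "evo_add (evo_diff (evo_basis i) (evo_scale (u i) (\<lambda>k. w k i)))
        (evo_scale (u i) (\<lambda>k. w k i)) \<in> M"
      by (rule evo_ideal_add[OF M evo_modular_unit_basis[OF u] col])
    moreover have "evo_add (evo_diff (evo_basis i) (evo_scale (u i) (\<lambda>k. w k i)))
        (evo_scale (u i) (\<lambda>k. w k i)) = evo_basis i"
      by (simp add: evo_add_def evo_diff_def)
    ultimately have "evo_basis i \<in> M" by simp
    with i show False ..
  qed
qed

lemma evo_modular_index_if_subset_hyperplane:
  assumes M: "evo_ideal w M" and u: "evo_modular_unit w M u" and sub: "M \<subseteq> evo_hyperplane i"
  shows "evo_modular_index w i"
proof -
  have coord: "evo_basis j i - u j * w i j = 0" for j
    using subsetD[OF sub evo_modular_unit_basis[OF u, of j]]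
    by (simp add: evo_hyperplane_def evo_diff_def evo_scale_def)
  have "w i j = 0" if "j \<noteq> i" for j
  proof (cases "u j = 0")
    case True
    then have "evo_basis j \<in> M"
      using evo_modular_unit_basis[OF u, of j] by (simp add: evo_diff_def evo_scale_def)
    then have "evo_mult w (evo_basis j) (evo_basis j) \<in> M"
      by (rule evo_ideal_mult[OF M evo_carrier_basis])
    then have "evo_mult w (evo_basis j) (evo_basis j) \<in> evo_hyperplane i"
      using sub by blast
    then show ?thesis unfolding evo_hyperplane_def evo_mult_basis by (simp add: evo_basis_def)
  next
    case False
    with coord[of j] that show ?thesis by (simp add: evo_basis_def)
  qed
  moreover have "w i i \<noteq> 0" using coord[of i] by (auto simp: evo_basis_def)
  ultimately show ?thesis by (simp add: evo_modular_index_def)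
qed

lemma evo_max_modular_ideal_eq_hyperplane:
  assumes "evo_structure w" "evo_max_modular_ideal w M"
  obtains i where "evo_modular_index w i" "M = evo_hyperplane i"
proof -
  obtain u where M: "evo_ideal w M" "M \<noteq> evo_carrier" and u: "evo_modular_unit w M u"
    using assms(2) by (auto simp: evo_max_modular_ideal_def evo_modular_ideal_def)
  obtain i where "evo_basis i \<notin> M" using evo_ideal_proper_basis_notin[OF M] .
  then have sub: "M \<subseteq> evo_hyperplane i"
    using evo_modular_ideal_subset_hyperplane[OF M(1) u] by blast
  then have i: "evo_modular_index w i"
    using evo_modular_index_if_subset_hyperplane[OF M(1) u] by blast
  then have "evo_max_modular_ideal w (evo_hyperplane i)"
    by (rule evo_max_modular_ideal_hyperplane[OF assms(1)])
  with assms(2) sub have "M = evo_hyperplane i"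
    by (simp add: evo_max_modular_ideal_def)
  with i that show thesis by blast
qed

theorem corollary3p12:
  fixes w :: "'i \<Rightarrow> 'i \<Rightarrow> 'k::real_normed_field" and M :: "('i \<Rightarrow> 'k) set"
  assumes "evo_structure w"
  shows "(evo_max_modular_ideal w M \<longleftrightarrow>
            (\<exists>i0. evo_modular_index w i0 \<and> M = evo_lin (UNIV - {i0}))) \<and>
         (\<forall>i0. evo_modular_index w i0 \<and> M = evo_lin (UNIV - {i0}) \<longrightarrow>
            evo_modular_unit w M (evo_scale (1 / w i0 i0) (evo_basis i0)))"
proof -
  have "evo_max_modular_ideal w M \<longleftrightarrow> (\<exists>i0. evo_modular_index w i0 \<and> M = evo_hyperplane i0)"
    using evo_max_modular_ideal_eq_hyperplane[OF assms, of M]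
      evo_max_modular_ideal_hyperplane[OF assms] by blast
  moreover have "\<forall>i0. evo_modular_index w i0 \<and> M = evo_hyperplane i0 \<longrightarrow>
      evo_modular_unit w M (evo_scale (1 / w i0 i0) (evo_basis i0))"
    using evo_modular_unit_hyperplane[OF assms] by blast
  ultimately show ?thesis unfolding evo_lin_Diff_singleton by blast
qed

end
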